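(* Let $M,N$ be finitary matroids on $E$, $b=(B_M,B_N)$ with $B_M$ a base of $M$ and $B_N$ a base of $N$, let $P$ be a finite directed path without shortcuts in $D(b)$, let $(B_M',B_N'):=b\circ P$, and let $U$ be the union of the escorting circuits of the arcs of $P$. Then $D_M(B_M')[E\setminus U]=D_M(B_M)[E\setminus U]$ and $D_N(B_N')[E\setminus U]=D_N(B_N)[E\setminus U]$.
   Context: For a base $B$ of a matroid $M$ on $E$, $D_M(B)$ is the digraph on $E$ with $ef\in D_M(B)$ iff $e\in E\setminus B$ and $f\in C_M(e,B)\setminus\{e\}$ ($C_M(e,B)$ the fundamental circuit of $e$ on $B$). $D^{-1}$ reverses all arcs; $D(b):=D_M(B_M)\cup D_N^{-1}(B_N)$. Escorting circuits of an arc $ef\in D(b)$: $C_M(e,B_M)$ if $ef\in D_M(B_M)$, and $C_N(f,B_N)$ if $ef\in D_N^{-1}(B_N)$. A shortcut of a path $P$ is an arc $ef\in D(b)$ with $e,f\in E(P)$, $f$ later than $e$ on $P$, $ef\notin A(P)$. $b\circ P=(B_M',B_N')$ where $B_M'$ is obtained from $B_M$ by adding tails and deleting heads of arcs in $A(P)\cap D_M(B_M)$, and $B_N'$ from $B_N$ by adding heads and deleting tails of arcs in $A(P)\cap D_N^{-1}(B_N)$ (these are bases). $D[X]$ denotes the subdigraph induced on $X$. *)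

theory Defs
  imports Main
begin

text \<open>A matroid on a (possibly infinite) ground set E, given by its set of
independent sets, following the axioms (I1), (I2), (I3), (IM) of
Bruhn, Diestel, Kriesell, Pendavingh and Wollan; finitary means that a set is
independent as soon as all its finite subsets are.\<close>

definition mbase :: "'a set \<Rightarrow> 'a set set \<Rightarrow> 'a set \<Rightarrow> bool" where
  "mbase E \<I> B \<longleftrightarrow> B \<in> \<I> \<and> (\<forall>X\<in>\<I>. B \<subseteq> X \<longrightarrow> X = B)"

definition matroid :: "'a set \<Rightarrow> 'a set set \<Rightarrow> bool" where
  "matroid E \<I> \<longleftrightarrow>
     (\<forall>X\<in>\<I>. X \<subseteq> E) \<and>
     {} \<in> \<I> \<and>
     (\<forall>X Y. X \<in> \<I> \<longrightarrow> Y \<subseteq> X \<longrightarrow> Y \<in> \<I>) \<and>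
     (\<forall>X Y. X \<in> \<I> \<longrightarrow> \<not> mbase E \<I> X \<longrightarrow> mbase E \<I> Y \<longrightarrow>
            (\<exists>x\<in>Y - X. insert x X \<in> \<I>)) \<and>
     (\<forall>X Y. X \<in> \<I> \<longrightarrow> X \<subseteq> Y \<longrightarrow> Y \<subseteq> E \<longrightarrow>
            (\<exists>Z. Z \<in> \<I> \<and> X \<subseteq> Z \<and> Z \<subseteq> Y \<and>
                 (\<forall>W\<in>\<I>. Z \<subseteq> W \<longrightarrow> W \<subseteq> Y \<longrightarrow> W = Z)))"

definition finitary_matroid :: "'a set \<Rightarrow> 'a set set \<Rightarrow> bool" where
  "finitary_matroid E \<I> \<longleftrightarrow> matroid E \<I> \<and>
     (\<forall>X. X \<subseteq> E \<longrightarrow> (\<forall>F. F \<subseteq> X \<longrightarrow> finite F \<longrightarrow> F \<in> \<I>) \<longrightarrow> X \<in> \<I>)"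

definition mcircuit :: "'a set \<Rightarrow> 'a set set \<Rightarrow> 'a set \<Rightarrow> bool" where
  "mcircuit E \<I> C \<longleftrightarrow> C \<subseteq> E \<and> C \<notin> \<I> \<and> (\<forall>D. D \<subset> C \<longrightarrow> D \<in> \<I>)"

definition fcirc :: "'a set \<Rightarrow> 'a set set \<Rightarrow> 'a \<Rightarrow> 'a set \<Rightarrow> 'a set" where
  "fcirc E \<I> e B = (THE C. mcircuit E \<I> C \<and> C \<subseteq> insert e B)"

definition exdig :: "'a set \<Rightarrow> 'a set set \<Rightarrow> 'a set \<Rightarrow> ('a \<times> 'a) set" where
  "exdig E \<I> B = {(e, f). e \<in> E - B \<and> f \<in> fcirc E \<I> e B - {e}}"

definition Db :: "'a set \<Rightarrow> 'a set set \<Rightarrow> 'a set set \<Rightarrow> 'a set \<Rightarrow> 'a set \<Rightarrow> ('a \<times> 'a) set" where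
  "Db E IM IN BM BN = exdig E IM BM \<union> (exdig E IN BN)\<inverse>"

definition path_arcs :: "'a list \<Rightarrow> ('a \<times> 'a) set" where
  "path_arcs P = set (zip P (tl P))"

definition dpath :: "('a \<times> 'a) set \<Rightarrow> 'a list \<Rightarrow> bool" where
  "dpath D P \<longleftrightarrow> P \<noteq> [] \<and> distinct P \<and> path_arcs P \<subseteq> D"

definition no_shortcuts :: "('a \<times> 'a) set \<Rightarrow> 'a list \<Rightarrow> bool" where
  "no_shortcuts D P \<longleftrightarrow>
     (\<forall>i j. i < j \<longrightarrow> j < length P \<longrightarrow> (P ! i, P ! j) \<in> D \<longrightarrow> (P ! i, P ! j) \<in> path_arcs P)"

definition newBM :: "'a set \<Rightarrow> 'a set set \<Rightarrow> 'a set \<Rightarrow> 'a list \<Rightarrow> 'a set" where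
  "newBM E IM BM P =
     (BM \<union> fst ` (path_arcs P \<inter> exdig E IM BM)) - snd ` (path_arcs P \<inter> exdig E IM BM)"

definition newBN :: "'a set \<Rightarrow> 'a set set \<Rightarrow> 'a set \<Rightarrow> 'a list \<Rightarrow> 'a set" where
  "newBN E IN BN P =
     (BN \<union> snd ` (path_arcs P \<inter> (exdig E IN BN)\<inverse>)) - fst ` (path_arcs P \<inter> (exdig E IN BN)\<inverse>)"

definition escort_union :: "'a set \<Rightarrow> 'a set set \<Rightarrow> 'a set set \<Rightarrow> 'a set \<Rightarrow> 'a set \<Rightarrow> 'a list \<Rightarrow> 'a set" where
  "escort_union E IM IN BM BN P =
     (\<Union>(e, f)\<in>path_arcs P \<inter> exdig E IM BM. fcirc E IM e BM) \<union>
     (\<Union>(e, f)\<in>path_arcs P \<inter> (exdig E IN BN)\<inverse>. fcirc E IN f BN)"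

definition induced :: "('a \<times> 'a) set \<Rightarrow> 'a set \<Rightarrow> ('a \<times> 'a) set" where
  "induced D X = D \<inter> (X \<times> X)"

end

theory Submission
  imports Defs
begin

(*
  Read from its last arc backwards, the list of arcs of P lying in D_M(B_M) is a chain of
  exchanges in which no exchange deletes an element of the fundamental circuit of an arc still
  to be processed: otherwise that circuit would yield a shortcut of P.  Hence every fundamental
  circuit C(e, B_M) stays the fundamental circuit of e in the current base, so each step is a base
  exchange.  A single exchange of e for f in a circuit C does not change, for y and x outside C,
  whether y + B - x is independent, because e and f can replace each other in C.  As the arcs of
  D_M(B) are characterised by exactly this independence, D_M is unchanged away from the circuits.
  For N the arcs of D_N^{-1}(B_N) are processed in path order, i.e. the reversed list.
*)

lemma matroid_indep_subset_ground: "matroid E I \<Longrightarrow> X \<in> I \<Longrightarrow> X \<subseteq> E"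
  unfolding matroid_def by meson

lemma matroid_indep_subset: "matroid E I \<Longrightarrow> X \<in> I \<Longrightarrow> Y \<subseteq> X \<Longrightarrow> Y \<in> I"
  unfolding matroid_def by meson

lemma matroid_augment:
  "matroid E I \<Longrightarrow> X \<in> I \<Longrightarrow> \<not> mbase E I X \<Longrightarrow> mbase E I Y \<Longrightarrow> \<exists>x\<in>Y - X. insert x X \<in> I"
  unfolding matroid_def by meson

lemma matroid_maximal_indep:
  "matroid E I \<Longrightarrow> X \<in> I \<Longrightarrow> X \<subseteq> Y \<Longrightarrow> Y \<subseteq> E \<Longrightarrow>
     \<exists>Z\<in>I. X \<subseteq> Z \<and> Z \<subseteq> Y \<and> (\<forall>W\<in>I. Z \<subseteq> W \<longrightarrow> W \<subseteq> Y \<longrightarrow> W = Z)"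
  unfolding matroid_def by meson

lemma finitary_matroid_matroid: "finitary_matroid E I \<Longrightarrow> matroid E I"
  unfolding finitary_matroid_def by blast

lemma finitary_matroid_indep_if_finite_subsets:
  "finitary_matroid E I \<Longrightarrow> X \<subseteq> E \<Longrightarrow> (\<And>F. F \<subseteq> X \<Longrightarrow> finite F \<Longrightarrow> F \<in> I) \<Longrightarrow> X \<in> I"
  unfolding finitary_matroid_def by blast

lemma mbase_indep: "mbase E I B \<Longrightarrow> B \<in> I"
  unfolding mbase_def by blast

lemma mcircuit_subset_dep: "matroid E I \<Longrightarrow> mcircuit E I C \<Longrightarrow> C \<subseteq> X \<Longrightarrow> X \<notin> I"
  unfolding mcircuit_def by (meson matroid_indep_subset)

lemma matroid_mbase_superset:
  assumes M: "matroid E I" and T: "T \<in> I"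
  obtains B where "mbase E I B" "T \<subseteq> B"
proof -
  obtain Z where Z: "Z \<in> I" "T \<subseteq> Z" and max: "\<forall>W\<in>I. Z \<subseteq> W \<longrightarrow> W \<subseteq> E \<longrightarrow> W = Z"
    using matroid_maximal_indep[OF M T matroid_indep_subset_ground[OF M T] order_refl] by blast
  have "mbase E I Z"
    unfolding mbase_def using Z(1) max matroid_indep_subset_ground[OF M] by blast
  then show thesis using Z(2) by (rule that)
qed

lemma finitary_dep_contains_mcircuit:
  assumes F: "finitary_matroid E I" and "X \<subseteq> E" "X \<notin> I"
  obtains C where "mcircuit E I C" "C \<subseteq> X"
proof -
  obtain S where S: "S \<subseteq> X" "finite S" "S \<notin> I"
    using finitary_matroid_indep_if_finite_subsets[OF F \<open>X \<subseteq> E\<close>] \<open>X \<notin> I\<close> by blast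
  define Deps where "Deps = {C. C \<subseteq> S \<and> C \<notin> I}"
  have "finite Deps" "S \<in> Deps" using S(2,3) unfolding Deps_def by auto
  then obtain C where C: "C \<in> Deps" and min: "\<And>D. D \<in> Deps \<Longrightarrow> D \<subseteq> C \<Longrightarrow> C = D"
    using finite_has_minimal[of Deps] by blast
  have "D \<in> I" if "D \<subset> C" for D
    using that C min[of D] unfolding Deps_def by blast
  then have "mcircuit E I C"
    using C S(1) \<open>X \<subseteq> E\<close> unfolding mcircuit_def Deps_def by blast
  moreover have "C \<subseteq> X" using C S(1) unfolding Deps_def by blast
  ultimately show thesis by (rule that)
qed

(*
  A maximal independent Z with C - f \<subseteq> Z \<subseteq> B - f + e is a base, since Z + f would contain C;
  augmenting B - f from Z can then only add e.
*)
lemma mbase_exchange_indep: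
  assumes M: "matroid E I" and B: "mbase E I B" and "f \<in> B" "e \<in> E"
    and C: "mcircuit E I C" "f \<in> C" "C \<subseteq> insert e B"
  shows "insert e (B - {f}) \<in> I"
proof -
  define Y where "Y = insert e (B - {f})"
  have "C - {f} \<in> I" using C(1,2) unfolding mcircuit_def by blast
  moreover have "C - {f} \<subseteq> Y" using C(3) unfolding Y_def by blast
  moreover have "Y \<subseteq> E"
    unfolding Y_def using \<open>e \<in> E\<close> matroid_indep_subset_ground[OF M mbase_indep[OF B]] by blast
  ultimately obtain Z where Z: "Z \<in> I" "C - {f} \<subseteq> Z" "Z \<subseteq> Y"
    and Zmax: "\<forall>W\<in>I. Z \<subseteq> W \<longrightarrow> W \<subseteq> Y \<longrightarrow> W = Z"
    using matroid_maximal_indep[OF M] by meson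
  have Z_base: "mbase E I Z"
  proof (rule ccontr)
    assume "\<not> mbase E I Z"
    then obtain x where x: "x \<in> B" "x \<notin> Z" "insert x Z \<in> I"
      using matroid_augment[OF M Z(1) _ B] by blast
    show False
    proof (cases "x = f")
      case True
      then have "C \<subseteq> insert x Z" using Z(2) by blast
      then show False using x(3) mcircuit_subset_dep[OF M C(1)] by blast
    next
      case False
      then have "insert x Z \<subseteq> Y" using x(1) Z(3) unfolding Y_def by blast
      then have "insert x Z = Z" using Zmax x(3) by blast
      then show False using x(2) by blast
    qed
  qed
  have "B - {f} \<in> I" using matroid_indep_subset[OF M mbase_indep[OF B]] by blast
  moreover have "\<not> mbase E I (B - {f})"
    using mbase_indep[OF B] \<open>f \<in> B\<close> unfolding mbase_def by blast
  ultimately obtain x where "x \<in> Z - (B - {f})" "insert x (B - {f}) \<in> I"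
    using matroid_augment[OF M _ _ Z_base] by blast
  moreover from this have "x = e" using Z(3) unfolding Y_def by blast
  ultimately show ?thesis unfolding Y_def by simp
qed

lemma indep_exchange:
  assumes M: "matroid E I" and "T \<in> I" "f \<in> T" "e \<in> E"
    and C: "mcircuit E I C" "f \<in> C" "C \<subseteq> insert e T"
  shows "insert e (T - {f}) \<in> I"
proof -
  obtain B where B: "mbase E I B" "T \<subseteq> B" using matroid_mbase_superset[OF M \<open>T \<in> I\<close>] .
  have "f \<in> B" "C \<subseteq> insert e B" using \<open>f \<in> T\<close> C(3) B(2) by blast+
  then have "insert e (B - {f}) \<in> I" by (rule mbase_exchange_indep[OF M B(1) _ \<open>e \<in> E\<close> C(1,2)])
  moreover have "insert e (T - {f}) \<subseteq> insert e (B - {f})" using B(2) by blast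
  ultimately show ?thesis by (rule matroid_indep_subset[OF M])
qed

lemma mcircuit_unique:
  assumes M: "matroid E I" and T: "T \<in> I" "e \<in> E"
    and C1: "mcircuit E I C1" "C1 \<subseteq> insert e T"
    and C2: "mcircuit E I C2" "C2 \<subseteq> insert e T"
  shows "C1 = C2"
proof (rule ccontr)
  assume "C1 \<noteq> C2"
  then have "\<not> C1 \<subseteq> C2" using C1(1) C2(1) unfolding mcircuit_def by blast
  then obtain f where f: "f \<in> C1" "f \<notin> C2" by blast
  have "\<not> C2 \<subseteq> T" using mcircuit_subset_dep[OF M C2(1)] T(1) by blast
  then have "f \<in> T" using f C1(2) C2(2) by blast
  then have "insert e (T - {f}) \<in> I" by (rule indep_exchange[OF M T(1) _ T(2) C1(1) f(1) C1(2)])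
  moreover have "C2 \<subseteq> insert e (T - {f})" using C2(2) f(2) by blast
  ultimately show False using mcircuit_subset_dep[OF M C2(1)] by blast
qed

lemma fcirc_eqI:
  assumes M: "matroid E I" and B: "mbase E I B" and "e \<in> E"
    and C: "mcircuit E I C" "C \<subseteq> insert e B"
  shows "fcirc E I e B = C"
  unfolding fcirc_def
proof (rule the_equality)
  show "mcircuit E I C \<and> C \<subseteq> insert e B" using C by blast
  show "C' = C" if "mcircuit E I C' \<and> C' \<subseteq> insert e B" for C'
    using mcircuit_unique[OF M mbase_indep[OF B] \<open>e \<in> E\<close> _ _ C] that by blast
qed

lemma
  assumes F: "finitary_matroid E I" and B: "mbase E I B" and e: "e \<in> E" "e \<notin> B"
  shows mcircuit_fcirc: "mcircuit E I (fcirc E I e B)"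
    and fcirc_subset: "fcirc E I e B \<subseteq> insert e B"
    and fcirc_self: "e \<in> fcirc E I e B"
proof -
  note M = finitary_matroid_matroid[OF F]
  have "insert e B \<notin> I" using B e(2) unfolding mbase_def by blast
  moreover have "insert e B \<subseteq> E" using e(1) matroid_indep_subset_ground[OF M mbase_indep[OF B]] by blast
  ultimately obtain C where C: "mcircuit E I C" "C \<subseteq> insert e B"
    using finitary_dep_contains_mcircuit[OF F] by blast
  with fcirc_eqI[OF M B e(1) C] show "mcircuit E I (fcirc E I e B)" "fcirc E I e B \<subseteq> insert e B"
    by simp_all
  moreover have "\<not> fcirc E I e B \<subseteq> B" using mcircuit_subset_dep[OF M] mbase_indep[OF B] calculation(1) by blast
  ultimately show "e \<in> fcirc E I e B" by blast
qed

lemma exdigD: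
  assumes F: "finitary_matroid E I" and B: "mbase E I B" and "(e, f) \<in> exdig E I B"
  shows "e \<in> E" "e \<notin> B" "f \<in> B" "f \<in> fcirc E I e B" "f \<noteq> e"
  using assms(3) fcirc_subset[OF F B] unfolding exdig_def by blast+

lemma exdig_iff:
  assumes F: "finitary_matroid E I" and B: "mbase E I B"
  shows "(e, x) \<in> exdig E I B \<longleftrightarrow> e \<in> E \<and> e \<notin> B \<and> x \<in> B \<and> insert e (B - {x}) \<in> I"
proof (cases "e \<in> E \<and> e \<notin> B")
  case True
  then have e: "e \<in> E" "e \<notin> B" by blast+
  note M = finitary_matroid_matroid[OF F]
  note C = mcircuit_fcirc[OF F B e] fcirc_subset[OF F B e]
  have "x \<in> fcirc E I e B - {e} \<longleftrightarrow> x \<in> B \<and> insert e (B - {x}) \<in> I"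
  proof
    assume x: "x \<in> fcirc E I e B - {e}"
    then have "x \<in> B" using C(2) by blast
    moreover have "insert e (B - {x}) \<in> I"
      using mbase_exchange_indep[OF M B \<open>x \<in> B\<close> e(1) C(1) _ C(2)] x by blast
    ultimately show "x \<in> B \<and> insert e (B - {x}) \<in> I" by blast
  next
    assume x: "x \<in> B \<and> insert e (B - {x}) \<in> I"
    then have "\<not> fcirc E I e B \<subseteq> insert e (B - {x})" using mcircuit_subset_dep[OF M C(1)] by blast
    then show "x \<in> fcirc E I e B - {e}" using C(2) x e(2) by blast
  qed
  then show ?thesis using e unfolding exdig_def by blast
qed (auto simp: exdig_def)

lemma mbase_exchange:
  assumes F: "finitary_matroid E I" and B: "mbase E I B" and ef: "(e, f) \<in> exdig E I B"
  shows "mbase E I (insert e (B - {f}))"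
proof (rule ccontr)
  note M = finitary_matroid_matroid[OF F]
  have e: "e \<in> E" "e \<notin> B" and "f \<in> B" and indep: "insert e (B - {f}) \<in> I"
    using ef unfolding exdig_iff[OF F B] by blast+
  assume "\<not> mbase E I (insert e (B - {f}))"
  then obtain x where "x \<in> B - insert e (B - {f})" "insert x (insert e (B - {f})) \<in> I"
    using matroid_augment[OF M indep _ B] by blast
  moreover have "fcirc E I e B \<subseteq> insert f (insert e (B - {f}))" using fcirc_subset[OF F B e] by blast
  ultimately show False using mcircuit_subset_dep[OF M mcircuit_fcirc[OF F B e]] by blast
qed

lemma mcircuit_exchange_indep_iff:
  assumes M: "matroid E I" and C: "mcircuit E I C" "C \<subseteq> insert e B" "e \<in> C" "f \<in> C"
    and ef: "e \<notin> B" "f \<in> B" and yx: "y \<notin> C" "x \<notin> C"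
  shows "insert y (insert e (B - {f}) - {x}) \<in> I \<longleftrightarrow> insert y (B - {x}) \<in> I"
proof -
  define R where "R = insert y (B - {f, x})"
  have "e \<in> E" "f \<in> E" using C(1,3,4) unfolding mcircuit_def by blast+
  have "e \<notin> R" "f \<notin> R" using ef yx(1) C(3,4) unfolding R_def by blast+
  have "C \<subseteq> insert e (insert f R)" "C \<subseteq> insert f (insert e R)"
    using C(2) yx(2) unfolding R_def by blast+
  have "insert e R \<in> I \<longleftrightarrow> insert f R \<in> I"
  proof
    assume "insert e R \<in> I"
    from indep_exchange[OF M this _ \<open>f \<in> E\<close> C(1,3)] show "insert f R \<in> I"
      using \<open>C \<subseteq> insert f (insert e R)\<close> \<open>e \<notin> R\<close> by simp
  next
    assume "insert f R \<in> I"
    from indep_exchange[OF M this _ \<open>e \<in> E\<close> C(1,4)] show "insert e R \<in> I"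
      using \<open>C \<subseteq> insert e (insert f R)\<close> \<open>f \<notin> R\<close> by simp
  qed
  moreover have "insert y (insert e (B - {f}) - {x}) = insert e R" "insert y (B - {x}) = insert f R"
    using ef yx C(3,4) unfolding R_def by blast+
  ultimately show ?thesis by simp
qed

definition exchange :: "'a set \<Rightarrow> ('a \<times> 'a) set \<Rightarrow> 'a set" where
  "exchange B A = (B \<union> fst ` A) - snd ` A"

definition fund_circuits :: "'a set \<Rightarrow> 'a set set \<Rightarrow> 'a set \<Rightarrow> ('a \<times> 'a) set \<Rightarrow> 'a set" where
  "fund_circuits E I B A = (\<Union>(e, f)\<in>A. fcirc E I e B)"

(*
  Exchanging along L means exchanging along its last arc first.  The sortedness condition says
  that no exchange deletes an element of the fundamental circuit of an arc exchanged after it.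
*)
definition exchange_chain :: "'a set \<Rightarrow> 'a set set \<Rightarrow> 'a set \<Rightarrow> ('a \<times> 'a) list \<Rightarrow> bool" where
  "exchange_chain E I B L \<longleftrightarrow> set L \<subseteq> exdig E I B \<and>
     sorted_wrt (\<lambda>a b. snd b \<notin> fcirc E I (fst a) B \<and> fst a \<noteq> fst b) L"

lemma exchange_chain_Cons_iff:
  "exchange_chain E I B ((e, f) # L) \<longleftrightarrow> (e, f) \<in> exdig E I B \<and>
     (\<forall>(e', f')\<in>set L. f' \<notin> fcirc E I e B \<and> e \<noteq> e') \<and> exchange_chain E I B L"
  unfolding exchange_chain_def by auto

lemma exchange_chain_Cons:
  assumes F: "finitary_matroid E I" and B: "mbase E I B" and L: "exchange_chain E I B ((e, f) # L)"
  shows "e \<notin> exchange B (set L)" "f \<in> exchange B (set L)"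
    and "fcirc E I e B \<subseteq> insert e (exchange B (set L))"
    and "exchange B (set ((e, f) # L)) = insert e (exchange B (set L) - {f})"
proof -
  have "(e, f) \<in> exdig E I B" and later: "\<forall>(e', f')\<in>set L. f' \<notin> fcirc E I e B \<and> e \<noteq> e'"
    using L unfolding exchange_chain_Cons_iff by blast+
  moreover have "set L \<subseteq> exdig E I B" using L unfolding exchange_chain_def by simp
  ultimately have e: "e \<in> E" "e \<notin> B" and "f \<in> B" "f \<in> fcirc E I e B" and "snd ` set L \<subseteq> B"
    using exdigD[OF F B] by force+
  then have "e \<notin> fst ` set L" "e \<notin> snd ` set L" "fcirc E I e B \<inter> snd ` set L = {}" "e \<noteq> f"
    using later by fastforce+
  moreover have "f \<notin> snd ` set L" using \<open>f \<in> fcirc E I e B\<close> calculation(3) by blast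
  ultimately show "e \<notin> exchange B (set L)" "f \<in> exchange B (set L)"
    and "fcirc E I e B \<subseteq> insert e (exchange B (set L))"
    and "exchange B (set ((e, f) # L)) = insert e (exchange B (set L) - {f})"
    using e \<open>f \<in> B\<close> fcirc_subset[OF F B e] unfolding exchange_def by auto
qed

lemma mbase_exchange_chain:
  assumes F: "finitary_matroid E I" and B: "mbase E I B"
  shows "exchange_chain E I B L \<Longrightarrow> mbase E I (exchange B (set L))"
proof (induction L)
  case Nil
  then show ?case using B by (simp add: exchange_def)
next
  case (Cons a L)
  obtain e f where a: "a = (e, f)" by fastforce
  note step = exchange_chain_Cons[OF F B Cons.prems[unfolded a]]
  have ef: "(e, f) \<in> exdig E I B" "e \<in> E" "e \<notin> B"
    using Cons.prems unfolding a exchange_chain_Cons_iff exdig_def by blast+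
  have base: "mbase E I (exchange B (set L))"
    using Cons.IH Cons.prems unfolding a exchange_chain_Cons_iff by blast
  have "fcirc E I e (exchange B (set L)) = fcirc E I e B"
    by (rule fcirc_eqI[OF finitary_matroid_matroid[OF F] base ef(2) mcircuit_fcirc[OF F B ef(2,3)] step(3)])
  then have "(e, f) \<in> exdig E I (exchange B (set L))"
    using ef(1,2) step(1) unfolding exdig_def by blast
  then show ?case unfolding a step(4) by (rule mbase_exchange[OF F base])
qed

lemma fund_circuits_insert: "fund_circuits E I B (insert (e, f) A) = fcirc E I e B \<union> fund_circuits E I B A"
  unfolding fund_circuits_def by simp

lemma exchange_chain_indep_iff:
  assumes F: "finitary_matroid E I" and B: "mbase E I B"
  shows "exchange_chain E I B L \<Longrightarrow> y \<notin> fund_circuits E I B (set L) \<Longrightarrow> x \<notin> fund_circuits E I B (set L) \<Longrightarrow>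
    insert y (exchange B (set L) - {x}) \<in> I \<longleftrightarrow> insert y (B - {x}) \<in> I"
proof (induction L)
  case Nil
  then show ?case by (simp add: exchange_def)
next
  case (Cons a L)
  obtain e f where a: "a = (e, f)" by fastforce
  note step = exchange_chain_Cons[OF F B Cons.prems(1)[unfolded a]]
  have ef: "e \<in> E" "e \<notin> B" "f \<in> fcirc E I e B"
    using Cons.prems(1) exdigD[OF F B] unfolding a exchange_chain_Cons_iff by blast+
  have L: "exchange_chain E I B L" and yx: "y \<notin> fcirc E I e B" "x \<notin> fcirc E I e B"
    and yx_L: "y \<notin> fund_circuits E I B (set L)" "x \<notin> fund_circuits E I B (set L)"
    using Cons.prems unfolding a by (simp_all add: exchange_chain_Cons_iff fund_circuits_insert)
  have "insert y (exchange B (set (a # L)) - {x}) \<in> I \<longleftrightarrow> insert y (exchange B (set L) - {x}) \<in> I"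
    unfolding a step(4)
    by (rule mcircuit_exchange_indep_iff[OF finitary_matroid_matroid[OF F] mcircuit_fcirc[OF F B ef(1,2)]
          step(3) fcirc_self[OF F B ef(1,2)] ef(3) step(1,2) yx])
  also have "\<dots> \<longleftrightarrow> insert y (B - {x}) \<in> I" by (rule Cons.IH[OF L yx_L])
  finally show ?case .
qed

lemma exchange_eq_outside_fund_circuits:
  assumes F: "finitary_matroid E I" and B: "mbase E I B" and A: "A \<subseteq> exdig E I B"
    and y: "y \<notin> fund_circuits E I B A"
  shows "y \<in> exchange B A \<longleftrightarrow> y \<in> B"
proof -
  have "y \<noteq> e" "y \<noteq> f" if "(e, f) \<in> A" for e f
  proof -
    have "e \<in> E" "e \<notin> B" "f \<in> fcirc E I e B" using exdigD[OF F B] A that by blast+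
    moreover have "y \<notin> fcirc E I e B" using y that unfolding fund_circuits_def by blast
    ultimately show "y \<noteq> e" "y \<noteq> f" using fcirc_self[OF F B] by blast+
  qed
  then show ?thesis unfolding exchange_def by force
qed

lemma induced_exdig_exchange_chain:
  assumes F: "finitary_matroid E I" and B: "mbase E I B" and L: "exchange_chain E I B L"
    and U: "fund_circuits E I B (set L) \<subseteq> U"
  shows "induced (exdig E I (exchange B (set L))) (E - U) = induced (exdig E I B) (E - U)"
proof -
  note B' = mbase_exchange_chain[OF F B L]
  have "(e, x) \<in> exdig E I (exchange B (set L)) \<longleftrightarrow> (e, x) \<in> exdig E I B"
    if "e \<notin> U" "x \<notin> U" for e x
  proof -
    have outside: "e \<notin> fund_circuits E I B (set L)" "x \<notin> fund_circuits E I B (set L)"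
      using that U by blast+
    have "set L \<subseteq> exdig E I B" using L unfolding exchange_chain_def by blast
    note same = exchange_eq_outside_fund_circuits[OF F B this]
    show ?thesis
      unfolding exdig_iff[OF F B] exdig_iff[OF F B'] same[OF outside(1)] same[OF outside(2)]
        exchange_chain_indep_iff[OF F B L outside] ..
  qed
  then show ?thesis unfolding induced_def by auto
qed

lemma no_shortcuts_sorted_wrt_arcs:
  assumes "distinct P" "no_shortcuts D P"
  shows "sorted_wrt (\<lambda>a b. (fst a, snd b) \<notin> D \<and> fst a \<noteq> fst b \<and> snd a \<noteq> snd b \<and> fst a \<noteq> snd b)
    (zip P (tl P))"
  unfolding sorted_wrt_iff_nth_less
proof (intro allI impI)
  fix i j assume "i < j" "j < length (zip P (tl P))"
  then have ij: "i < j" "Suc j < length P" by auto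
  have distinct_nth: "P ! k = P ! l \<longleftrightarrow> k = l" if "k < length P" "l < length P" for k l
    using nth_eq_iff_index_eq[OF \<open>distinct P\<close> that] .
  have "(P ! i, P ! Suc j) \<notin> D"
  proof
    assume "(P ! i, P ! Suc j) \<in> D"
    then have "(P ! i, P ! Suc j) \<in> set (zip P (tl P))"
      using \<open>no_shortcuts D P\<close> ij unfolding no_shortcuts_def path_arcs_def by simp
    then obtain k where k: "k < length (tl P)" "P ! k = P ! i" "tl P ! k = P ! Suc j"
      unfolding set_zip by auto
    then have "k = i" "Suc k = Suc j" using ij distinct_nth by (simp_all add: nth_tl)
    then show False using ij(1) by simp
  qed
  then show "(fst (zip P (tl P) ! i), snd (zip P (tl P) ! j)) \<notin> D \<and>
      fst (zip P (tl P) ! i) \<noteq> fst (zip P (tl P) ! j) \<and>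
      snd (zip P (tl P) ! i) \<noteq> snd (zip P (tl P) ! j) \<and> fst (zip P (tl P) ! i) \<noteq> snd (zip P (tl P) ! j)"
    using ij distinct_nth by (simp add: nth_tl)
qed

lemma exchange_chain_path_arcs:
  assumes "distinct P" "no_shortcuts D P" "exdig E I B \<subseteq> D"
  shows "exchange_chain E I B (filter (\<lambda>a. a \<in> exdig E I B) (zip P (tl P)))"
  unfolding exchange_chain_def
proof (intro conjI)
  show "sorted_wrt (\<lambda>a b. snd b \<notin> fcirc E I (fst a) B \<and> fst a \<noteq> fst b)
      (filter (\<lambda>a. a \<in> exdig E I B) (zip P (tl P)))"
  proof (rule sorted_wrt_mono_rel[OF _ sorted_wrt_filter[OF no_shortcuts_sorted_wrt_arcs[OF assms(1,2)]]])
    fix a b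
    assume "a \<in> set (filter (\<lambda>a. a \<in> exdig E I B) (zip P (tl P)))"
      and ab: "(fst a, snd b) \<notin> D \<and> fst a \<noteq> fst b \<and> snd a \<noteq> snd b \<and> fst a \<noteq> snd b"
    then have "fst a \<in> E - B" unfolding exdig_def by auto
    then have "(fst a, snd b) \<in> exdig E I B" if "snd b \<in> fcirc E I (fst a) B"
      using that ab unfolding exdig_def by auto
    then show "snd b \<notin> fcirc E I (fst a) B \<and> fst a \<noteq> fst b" using ab assms(3) by blast
  qed
qed auto

lemma exchange_chain_rev_path_arcs:
  assumes "distinct P" "no_shortcuts D P" "(exdig E I B)\<inverse> \<subseteq> D"
  shows "exchange_chain E I B (rev (map prod.swap (filter (\<lambda>a. a \<in> (exdig E I B)\<inverse>) (zip P (tl P)))))"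
  unfolding exchange_chain_def sorted_wrt_rev sorted_wrt_map
proof (intro conjI)
  show "sorted_wrt (\<lambda>a b. snd (prod.swap a) \<notin> fcirc E I (fst (prod.swap b)) B \<and>
      fst (prod.swap b) \<noteq> fst (prod.swap a)) (filter (\<lambda>a. a \<in> (exdig E I B)\<inverse>) (zip P (tl P)))"
  proof (rule sorted_wrt_mono_rel[OF _ sorted_wrt_filter[OF no_shortcuts_sorted_wrt_arcs[OF assms(1,2)]]])
    fix a b
    assume "b \<in> set (filter (\<lambda>a. a \<in> (exdig E I B)\<inverse>) (zip P (tl P)))"
      and ab: "(fst a, snd b) \<notin> D \<and> fst a \<noteq> fst b \<and> snd a \<noteq> snd b \<and> fst a \<noteq> snd b"
    then have "snd b \<in> E - B" unfolding exdig_def by auto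
    then have "(snd b, fst a) \<in> exdig E I B" if "fst a \<in> fcirc E I (snd b) B"
      using that ab unfolding exdig_def by auto
    then show "snd (prod.swap a) \<notin> fcirc E I (fst (prod.swap b)) B \<and> fst (prod.swap b) \<noteq> fst (prod.swap a)"
      using ab assms(3) by auto
  qed
qed auto

theorem claim3p6:
  fixes E :: "'a set" and IM IN :: "'a set set" and BM BN :: "'a set" and P :: "'a list"
  assumes "finitary_matroid E IM" and "finitary_matroid E IN"
    and "mbase E IM BM" and "mbase E IN BN"
    and "dpath (Db E IM IN BM BN) P"
    and "no_shortcuts (Db E IM IN BM BN) P"
  shows "induced (exdig E IM (newBM E IM BM P)) (E - escort_union E IM IN BM BN P)
           = induced (exdig E IM BM) (E - escort_union E IM IN BM BN P)
       \<and> induced (exdig E IN (newBN E IN BN P)) (E - escort_union E IM IN BM BN P)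
           = induced (exdig E IN BN) (E - escort_union E IM IN BM BN P)"
proof -
  define LM where "LM = filter (\<lambda>a. a \<in> exdig E IM BM) (zip P (tl P))"
  define LN where "LN = rev (map prod.swap (filter (\<lambda>a. a \<in> (exdig E IN BN)\<inverse>) (zip P (tl P))))"
  have "distinct P" using assms(5) unfolding dpath_def by blast
  have LM: "exchange_chain E IM BM LM"
    unfolding LM_def by (rule exchange_chain_path_arcs[OF \<open>distinct P\<close> assms(6)]) (simp add: Db_def)
  have LN: "exchange_chain E IN BN LN"
    unfolding LN_def by (rule exchange_chain_rev_path_arcs[OF \<open>distinct P\<close> assms(6)]) (simp add: Db_def)
  have set_LM: "set LM = path_arcs P \<inter> exdig E IM BM"
    and set_LN: "set LN = prod.swap ` (path_arcs P \<inter> (exdig E IN BN)\<inverse>)"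
    unfolding LM_def LN_def path_arcs_def by auto
  have "newBM E IM BM P = exchange BM (set LM)" "newBN E IN BN P = exchange BN (set LN)"
    unfolding newBM_def newBN_def exchange_def set_LM set_LN by (simp_all add: image_image)
  moreover have "escort_union E IM IN BM BN P = fund_circuits E IM BM (set LM) \<union> fund_circuits E IN BN (set LN)"
    unfolding escort_union_def fund_circuits_def set_LM set_LN by (simp add: image_image split_def)
  ultimately show ?thesis
    using induced_exdig_exchange_chain[OF assms(1,3) LM] induced_exdig_exchange_chain[OF assms(2,4) LN]
    by simp
qed

end
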